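(* Let $V$ be a finite set of INF sentences over a vocabulary $\Sigma$ and let $\tilde I$ be a four-valued $\Sigma$-structure with domain $D$. Then $\mathrm{tf}(\lim_{O(V)}(\tilde I)) = \mathrm{glb}_{\le_t}\{M \mid M \text{ a two-valued } \mathrm{tf}(\Sigma)\text{-structure with domain } D,\ M\models\Delta_V,\ \mathrm{tf}(\tilde I)\le_t M\}$, where $O(V)=\{O_\varphi\mid\varphi\in V\}$.
   Context: Vocabularies are finite sets of predicate symbols (equality interpreted as identity). Truth values $\mathbf{t},\mathbf{f},\mathbf{u},\mathbf{i}$; inverse swaps $\mathbf{t},\mathbf{f}$ and fixes $\mathbf{u},\mathbf{i}$. Truth order $\le_t$: $\mathbf{f}\le_t\mathbf{u}\le_t\mathbf{t}$, $\mathbf{f}\le_t\mathbf{i}\le_t\mathbf{t}$. Precision order $\le_p$: $\mathbf{u}\le_p\mathbf{t}\le_p\mathbf{i}$, $\mathbf{u}\le_p\mathbf{f}\le_p\mathbf{i}$. A four-valued $\Sigma$-structure $\tilde I$ has domain $D$ and assigns each $P/n\in\Sigma$ a function $P^{\tilde I}:D^n\to\{\mathbf{t},\mathbf{f},\mathbf{u},\mathbf{i}\}$; two-valued structures are identified with ordinary structures. $\le_p$ on structures is pointwise. Formula values $\tilde I\theta(\varphi)$: atoms via $P^{\tilde I}$, $\neg$ by inverse, $\wedge,\forall$ by $\le_t$-glb, $\vee,\exists$ by $\le_t$-lub. For two-valued structures over the same vocabulary and domain, $M\le_t M'$ means $P^M\subseteq P^{M'}$ for every predicate, and $\mathrm{glb}_{\le_t}$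 is pointwise intersection. Encoding: $\mathrm{tf}(\Sigma)=\{P^{ct}/n,P^{cf}/n\mid P/n\in\Sigma\}$; $\mathrm{tf}(\tilde I)$ is the two-valued $\mathrm{tf}(\Sigma)$-structure with domain $D$ and $(P^{ct})^{\mathrm{tf}(\tilde I)}=\{\overline{d}\mid P^{\tilde I}(\overline{d})\ge_p\mathbf{t}\}$, $(P^{cf})^{\mathrm{tf}(\tilde I)}=\{\overline{d}\mid P^{\tilde I}(\overline{d})\ge_p\mathbf{f}\}$. For formulas over $\Sigma$, $\varphi^{ct}$ and $\varphi^{cf}$ are defined by simultaneous induction: $(P(\overline{x}))^{ct}=P^{ct}(\overline{x})$, $(P(\overline{x}))^{cf}=P^{cf}(\overline{x})$; $(\neg\varphi)^{ct}=\varphi^{cf}$, $(\neg\varphi)^{cf}=\varphi^{ct}$; $(\varphi\wedge\psi)^{ct}=\varphi^{ct}\wedge\psi^{ct}$, $(\varphi\wedge\psi)^{cf}=\varphi^{cf}\vee\psi^{cf}$; $(\varphi\vee\psi)^{ct}=\varphi^{ct}\vee\psi^{ct}$, $(\varphi\vee\psi)^{cf}=\varphi^{cf}\wedge\psi^{cf}$; $(\forall x\varphi)^{ct}=\forall x\varphi^{ct}$, $(\forall x\varphi)^{cf}=\exists x\varphi^{cf}$; $(\exists x\varphi)^{ct}=\exists x\varphi^{ct}$, $(\exists x\varphi)^{cf}=\forall x\varphi^{cf}$. INF sentences: $\forall\overline{x}(\psi\supset L[\overline{x}])$ with $\psi$ having free variables among $\overline{x}$ and $L$ one of $P(\overline{x}),\neg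 P(\overline{x})$. INF propagator $O_\varphi$: $O_\varphi(\tilde I)$ agrees with $\tilde I$ except that for each $\overline{d}$ with $\tilde I[\overline{x}/\overline{d}](\psi)\ge_p\mathbf{t}$, $P^{O_\varphi(\tilde I)}(\overline{d})=\mathrm{lub}_{\le_p}\{\mathbf{t},P^{\tilde I}(\overline{d})\}$ (resp. with $\mathbf{f}$ if $L$ is negative). A $W$-refinement sequence from $\tilde I$ (for a set $W$ of operators) is a (possibly transfinite) sequence $\langle\tilde J_\xi\rangle_{\xi\le\alpha}$ with $\tilde J_0=\tilde I$, $\tilde J_{\xi+1}=O(\tilde J_\xi)$ for some $O\in W$, $\tilde J_\xi<_p\tilde J_{\xi+1}$, and $\le_p$-lubs at limits; stabilizing if $O(\tilde J_\alpha)=\tilde J_\alpha$ for all $O\in W$. For $W=O(V)$ all stabilizing sequences from $\tilde I$ have the same last element $\lim_{O(V)}(\tilde I)$. Rule sets: $\Delta_V=\{\forall\overline{x}\,((L[\overline{x}])^{ct}\leftarrow\psi^{ct})\mid\forall\overline{x}(\psi\supset L[\overline{x}])\in V\}$, where $(P(\overline{x}))^{ct}=P^{ct}(\overline{x})$ and $(\neg P(\overline{x}))^{ct}=P^{cf}(\overline{x})$. For a rule set $\Delta$ over $\mathrm{tf}(\Sigma)$, the operator $T_\Delta$ on two-valued $\mathrm{tf}(\Sigma)$-structures is: $\overline{d}\in Q^{T_\Delta(M)}$ iff $\overline{d}\in Q^M$ or there is a rule $\forall\overline{x}(Q(\overline{x})\leftarrow\chi)$ in $\Delta$ with $M[\overline{x}/\overline{d}]\models\chi$.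 $M\models\Delta$ iff $M$ is a fixpoint of $T_\Delta$. *)

theory Defs
  imports Main
begin

datatype tv = Tt | Ff | Uu | Ii

fun inv_tv :: "tv \<Rightarrow> tv" where
  "inv_tv Tt = Ff" | "inv_tv Ff = Tt" | "inv_tv Uu = Uu" | "inv_tv Ii = Ii"

definition leq_t :: "tv \<Rightarrow> tv \<Rightarrow> bool" where
  "leq_t a b \<longleftrightarrow> a = b \<or> a = Ff \<or> b = Tt"

definition leq_p :: "tv \<Rightarrow> tv \<Rightarrow> bool" where
  "leq_p a b \<longleftrightarrow> a = b \<or> a = Uu \<or> b = Ii"

definition glb_t :: "tv set \<Rightarrow> tv" where
  "glb_t S = (if Ff \<in> S \<or> (Uu \<in> S \<and> Ii \<in> S) then Ff
              else if Uu \<in> S then Uu else if Ii \<in> S then Ii else Tt)"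

definition lub_t :: "tv set \<Rightarrow> tv" where
  "lub_t S = (if Tt \<in> S \<or> (Uu \<in> S \<and> Ii \<in> S) then Tt
              else if Uu \<in> S then Uu else if Ii \<in> S then Ii else Ff)"

definition lub_p :: "tv set \<Rightarrow> tv" where
  "lub_p S = (if Ii \<in> S \<or> (Tt \<in> S \<and> Ff \<in> S) then Ii
              else if Tt \<in> S then Tt else if Ff \<in> S then Ff else Uu)"

datatype ('p, 'v) fm =
    Pred 'p "'v list"
  | Eq 'v 'v
  | Neg "('p, 'v) fm"
  | Conj "('p, 'v) fm" "('p, 'v) fm"
  | Disj "('p, 'v) fm" "('p, 'v) fm"
  | All 'v "('p, 'v) fm"
  | Ex 'v "('p, 'v) fm"

fun fv :: "('p, 'v) fm \<Rightarrow> 'v set" where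
  "fv (Pred P xs) = set xs"
| "fv (Eq x y) = {x, y}"
| "fv (Neg f) = fv f"
| "fv (Conj f g) = fv f \<union> fv g"
| "fv (Disj f g) = fv f \<union> fv g"
| "fv (All x f) = fv f - {x}"
| "fv (Ex x f) = fv f - {x}"

fun wf_fm :: "'p set \<Rightarrow> ('p \<Rightarrow> nat) \<Rightarrow> ('p, 'v) fm \<Rightarrow> bool" where
  "wf_fm Sig ar (Pred P xs) \<longleftrightarrow> P \<in> Sig \<and> length xs = ar P"
| "wf_fm Sig ar (Eq x y) \<longleftrightarrow> True"
| "wf_fm Sig ar (Neg f) \<longleftrightarrow> wf_fm Sig ar f"
| "wf_fm Sig ar (Conj f g) \<longleftrightarrow> wf_fm Sig ar f \<and> wf_fm Sig ar g"
| "wf_fm Sig ar (Disj f g) \<longleftrightarrow> wf_fm Sig ar f \<and> wf_fm Sig ar g"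
| "wf_fm Sig ar (All x f) \<longleftrightarrow> wf_fm Sig ar f"
| "wf_fm Sig ar (Ex x f) \<longleftrightarrow> wf_fm Sig ar f"

section \<open>Structures; the domain D is the (arbitrary, nonempty) type 'd\<close>

type_synonym ('p, 'd) struct4 = "'p \<Rightarrow> 'd list \<Rightarrow> tv"

text \<open>A four-valued Sigma-structure: junk tuples (wrong predicate or arity) carry u.\<close>
definition wf4 :: "'p set \<Rightarrow> ('p \<Rightarrow> nat) \<Rightarrow> ('p, 'd) struct4 \<Rightarrow> bool" where
  "wf4 Sig ar I \<longleftrightarrow> (\<forall>P ds. \<not> (P \<in> Sig \<and> length ds = ar P) \<longrightarrow> I P ds = Uu)"

fun upd :: "('v \<Rightarrow> 'd) \<Rightarrow> 'v list \<Rightarrow> 'd list \<Rightarrow> ('v \<Rightarrow> 'd)" where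
  "upd \<theta> (x # xs) (d # ds) = upd (\<theta>(x := d)) xs ds"
| "upd \<theta> _ _ = \<theta>"

fun val4 :: "('p, 'd) struct4 \<Rightarrow> ('v \<Rightarrow> 'd) \<Rightarrow> ('p, 'v) fm \<Rightarrow> tv" where
  "val4 I \<theta> (Pred P xs) = I P (map \<theta> xs)"
| "val4 I \<theta> (Eq x y) = (if \<theta> x = \<theta> y then Tt else Ff)"
| "val4 I \<theta> (Neg f) = inv_tv (val4 I \<theta> f)"
| "val4 I \<theta> (Conj f g) = glb_t {val4 I \<theta> f, val4 I \<theta> g}"
| "val4 I \<theta> (Disj f g) = lub_t {val4 I \<theta> f, val4 I \<theta> g}"
| "val4 I \<theta> (All x f) = glb_t {val4 I (\<theta>(x := d)) f | d. True}"
| "val4 I \<theta> (Ex x f) = lub_t {val4 I (\<theta>(x := d)) f | d. True}"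

definition leq_p_s :: "('p, 'd) struct4 \<Rightarrow> ('p, 'd) struct4 \<Rightarrow> bool" where
  "leq_p_s I J \<longleftrightarrow> (\<forall>P ds. leq_p (I P ds) (J P ds))"

definition less_p_s :: "('p, 'd) struct4 \<Rightarrow> ('p, 'd) struct4 \<Rightarrow> bool" where
  "less_p_s I J \<longleftrightarrow> leq_p_s I J \<and> I \<noteq> J"

definition lub_p_s :: "('p, 'd) struct4 set \<Rightarrow> ('p, 'd) struct4" where
  "lub_p_s S = (\<lambda>P ds. lub_p {J P ds | J. J \<in> S})"

datatype 'p tfsym = Ct 'p | Cf 'p

fun base_sym :: "'p tfsym \<Rightarrow> 'p" where
  "base_sym (Ct P) = P" | "base_sym (Cf P) = P"

type_synonym ('p, 'd) struct2 = "'p tfsym \<Rightarrow> 'd list \<Rightarrow> bool"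

definition wf2 :: "'p set \<Rightarrow> ('p \<Rightarrow> nat) \<Rightarrow> ('p, 'd) struct2 \<Rightarrow> bool" where
  "wf2 Sig ar M \<longleftrightarrow> (\<forall>Q ds. M Q ds \<longrightarrow> base_sym Q \<in> Sig \<and> length ds = ar (base_sym Q))"

definition tf :: "('p, 'd) struct4 \<Rightarrow> ('p, 'd) struct2" where
  "tf I = (\<lambda>Q ds. case Q of Ct P \<Rightarrow> leq_p Tt (I P ds) | Cf P \<Rightarrow> leq_p Ff (I P ds))"

definition leq_t2 :: "('p, 'd) struct2 \<Rightarrow> ('p, 'd) struct2 \<Rightarrow> bool" where
  "leq_t2 M M' \<longleftrightarrow> (\<forall>Q ds. M Q ds \<longrightarrow> M' Q ds)"

definition glb_t2 :: "('p, 'd) struct2 set \<Rightarrow> ('p, 'd) struct2" where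
  "glb_t2 Ms = (\<lambda>Q ds. \<forall>M\<in>Ms. M Q ds)"

fun ct :: "('p, 'v) fm \<Rightarrow> ('p tfsym, 'v) fm"
and cf :: "('p, 'v) fm \<Rightarrow> ('p tfsym, 'v) fm" where
  "ct (Pred P xs) = Pred (Ct P) xs"
| "cf (Pred P xs) = Pred (Cf P) xs"
| "ct (Eq x y) = Eq x y"
| "cf (Eq x y) = Neg (Eq x y)"
| "ct (Neg f) = cf f"
| "cf (Neg f) = ct f"
| "ct (Conj f g) = Conj (ct f) (ct g)"
| "cf (Conj f g) = Disj (cf f) (cf g)"
| "ct (Disj f g) = Disj (ct f) (ct g)"
| "cf (Disj f g) = Conj (cf f) (cf g)"
| "ct (All x f) = All x (ct f)"
| "cf (All x f) = Ex x (cf f)"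
| "ct (Ex x f) = Ex x (ct f)"
| "cf (Ex x f) = All x (cf f)"

fun sat :: "('q \<Rightarrow> 'd list \<Rightarrow> bool) \<Rightarrow> ('v \<Rightarrow> 'd) \<Rightarrow> ('q, 'v) fm \<Rightarrow> bool" where
  "sat M \<theta> (Pred P xs) = M P (map \<theta> xs)"
| "sat M \<theta> (Eq x y) = (\<theta> x = \<theta> y)"
| "sat M \<theta> (Neg f) = (\<not> sat M \<theta> f)"
| "sat M \<theta> (Conj f g) = (sat M \<theta> f \<and> sat M \<theta> g)"
| "sat M \<theta> (Disj f g) = (sat M \<theta> f \<or> sat M \<theta> g)"
| "sat M \<theta> (All x f) = (\<forall>d. sat M (\<theta>(x := d)) f)"
| "sat M \<theta> (Ex x f) = (\<exists>d. sat M (\<theta>(x := d)) f)"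

text \<open>INF sentence forall xs (psi \<supset> L[xs]); L = P(xs) if pos, else \<not>P(xs).\<close>
record ('p, 'v) inf_sent =
  ivars :: "'v list"
  ibody :: "('p, 'v) fm"
  ipred :: 'p
  ipos  :: bool

definition wf_inf :: "'p set \<Rightarrow> ('p \<Rightarrow> nat) \<Rightarrow> ('p, 'v) inf_sent \<Rightarrow> bool" where
  "wf_inf Sig ar \<phi> \<longleftrightarrow> ipred \<phi> \<in> Sig \<and> length (ivars \<phi>) = ar (ipred \<phi>) \<and>
     distinct (ivars \<phi>) \<and> fv (ibody \<phi>) \<subseteq> set (ivars \<phi>) \<and> wf_fm Sig ar (ibody \<phi>)"

text \<open>The base assignment is irrelevant since fv psi is among the xs.\<close>
definition inf_prop :: "('p, 'v) inf_sent \<Rightarrow> ('p, 'd) struct4 \<Rightarrow> ('p, 'd) struct4" where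
  "inf_prop \<phi> I = (\<lambda>Q ds.
     if Q = ipred \<phi> \<and> length ds = length (ivars \<phi>)
        \<and> leq_p Tt (val4 I (upd (\<lambda>_. undefined) (ivars \<phi>) ds) (ibody \<phi>))
     then lub_p {if ipos \<phi> then Tt else Ff, I Q ds}
     else I Q ds)"

definition Ops :: "('p, 'v) inf_sent set \<Rightarrow> (('p, 'd) struct4 \<Rightarrow> ('p, 'd) struct4) set" where
  "Ops V = inf_prop ` V"

text \<open>A (possibly transfinite) W-refinement sequence from I0 ending in Last, represented by
  its range S (it is strictly <_p-increasing, hence injective, so it is determined up to
  re-indexing by its range): S is well-ordered by <=_p with least element I0 and greatest
  element Last; every successor element arises from its immediate predecessor by an
  operator of W (with strict increase); every limit element is the <=_p-lub of its
  predecessors.\<close>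
definition imm_pred :: "('p, 'd) struct4 set \<Rightarrow> ('p, 'd) struct4 \<Rightarrow> ('p, 'd) struct4 \<Rightarrow> bool" where
  "imm_pred S J' J \<longleftrightarrow> J' \<in> S \<and> less_p_s J' J \<and> \<not> (\<exists>K\<in>S. less_p_s J' K \<and> less_p_s K J)"

definition refinement_seq ::
  "(('p, 'd) struct4 \<Rightarrow> ('p, 'd) struct4) set \<Rightarrow> ('p, 'd) struct4 \<Rightarrow>
   ('p, 'd) struct4 set \<Rightarrow> ('p, 'd) struct4 \<Rightarrow> bool" where
  "refinement_seq W I0 S Last \<longleftrightarrow>
     I0 \<in> S \<and> Last \<in> S \<and>
     (\<forall>J\<in>S. \<forall>K\<in>S. leq_p_s J K \<or> leq_p_s K J) \<and>
     (\<forall>A. A \<subseteq> S \<and> A \<noteq> {} \<longrightarrow> (\<exists>m\<in>A. \<forall>a\<in>A. leq_p_s m a)) \<and>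
     (\<forall>J\<in>S. leq_p_s I0 J \<and> leq_p_s J Last) \<and>
     (\<forall>J\<in>S. J \<noteq> I0 \<longrightarrow>
        ((\<exists>J'. imm_pred S J' J \<and> (\<exists>Op\<in>W. J = Op J')) \<or>
         ((\<nexists>J'. imm_pred S J' J) \<and> J = lub_p_s {K\<in>S. less_p_s K J})))"

definition stabilizing_seq ::
  "(('p, 'd) struct4 \<Rightarrow> ('p, 'd) struct4) set \<Rightarrow> ('p, 'd) struct4 \<Rightarrow>
   ('p, 'd) struct4 set \<Rightarrow> ('p, 'd) struct4 \<Rightarrow> bool" where
  "stabilizing_seq W I0 S Last \<longleftrightarrow> refinement_seq W I0 S Last \<and> (\<forall>Op\<in>W. Op Last = Last)"

definition lim_ref ::
  "(('p, 'd) struct4 \<Rightarrow> ('p, 'd) struct4) set \<Rightarrow> ('p, 'd) struct4 \<Rightarrow> ('p, 'd) struct4" where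
  "lim_ref W I0 = (THE J. \<exists>S. stabilizing_seq W I0 S J)"

text \<open>A rule forall xs (Q(xs) <- chi) is represented as (Q, xs, chi).\<close>
type_synonym ('p, 'v) rule = "'p tfsym \<times> 'v list \<times> ('p tfsym, 'v) fm"

definition Delta :: "('p, 'v) inf_sent set \<Rightarrow> ('p, 'v) rule set" where
  "Delta V = (\<lambda>\<phi>. ((if ipos \<phi> then Ct (ipred \<phi>) else Cf (ipred \<phi>)), ivars \<phi>, ct (ibody \<phi>))) ` V"

definition T_op :: "('p, 'v) rule set \<Rightarrow> ('p, 'd) struct2 \<Rightarrow> ('p, 'd) struct2" where
  "T_op \<Delta> M = (\<lambda>Q ds. M Q ds \<or>
     (\<exists>xs \<chi>. (Q, xs, \<chi>) \<in> \<Delta> \<and> length ds = length xs \<and> sat M (upd (\<lambda>_. undefined) xs ds) \<chi>))"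

definition models_rules :: "('p, 'd) struct2 \<Rightarrow> ('p, 'v) rule set \<Rightarrow> bool" where
  "models_rules M \<Delta> \<longleftrightarrow> T_op \<Delta> M = M"

end

theory Submission
  imports Defs "HOL-Library.Bourbaki_Witt_Fixpoint"
begin

text \<open>
  Under the encoding tf, a four-valued structure J satisfies psi to at least the precision t
  exactly when tf J satisfies psi^ct. Hence applying the propagator of
  forall xs (psi \<supset> L[xs]) to J adds to tf J precisely what one application of the rule
  L^ct(xs) <- psi^ct adds. Along a refinement sequence from I, tf therefore only ever adds facts
  that every model of Delta_V above tf I already contains (transfinite induction, using that
  ct-formulas are monotone), while the tf-image of a stabilizing last element is itself such a
  model. So it is the least one, i.e. the glb. Stabilizing sequences exist by the Bourbaki-Witt
  construction, and since tf is injective their last element is unique.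
\<close>

lemma leq_p_refl: "leq_p a a"
  by (simp add: leq_p_def)

lemma leq_p_trans: "leq_p a b \<Longrightarrow> leq_p b c \<Longrightarrow> leq_p a c"
  unfolding leq_p_def by (cases a; cases b; cases c) auto

lemma leq_p_antisym: "leq_p a b \<Longrightarrow> leq_p b a \<Longrightarrow> a = b"
  unfolding leq_p_def by (cases a; cases b) auto

lemma leq_p_simps [simp]:
  "leq_p Tt Tt" "leq_p Ff Ff" "\<not> leq_p Tt Ff" "\<not> leq_p Ff Tt" "\<not> leq_p Tt Uu" "\<not> leq_p Ff Uu"
  by (auto simp: leq_p_def)

lemma tv_eqI: "leq_p Tt a = leq_p Tt b \<Longrightarrow> leq_p Ff a = leq_p Ff b \<Longrightarrow> a = b"
  by (cases a; cases b) (auto simp: leq_p_def)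

lemma lub_p_upper: "x \<in> S \<Longrightarrow> leq_p x (lub_p S)"
  unfolding lub_p_def leq_p_def by (auto; metis tv.exhaust tv.distinct)

lemma lub_p_least: "(\<And>x. x \<in> S \<Longrightarrow> leq_p x u) \<Longrightarrow> leq_p (lub_p S) u"
  unfolding lub_p_def leq_p_def by (auto; metis tv.exhaust tv.distinct)

lemma leq_p_Tt_lub_p_iff: "leq_p Tt (lub_p S) \<longleftrightarrow> (\<exists>x\<in>S. leq_p Tt x)"
  unfolding lub_p_def leq_p_def by (auto; metis tv.exhaust tv.distinct)

lemma leq_p_Ff_lub_p_iff: "leq_p Ff (lub_p S) \<longleftrightarrow> (\<exists>x\<in>S. leq_p Ff x)"
  unfolding lub_p_def leq_p_def by (auto; metis tv.exhaust tv.distinct)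

lemma leq_p_Tt_glb_t_iff: "leq_p Tt (glb_t S) \<longleftrightarrow> (\<forall>x\<in>S. leq_p Tt x)"
  unfolding glb_t_def leq_p_def by (auto; metis tv.exhaust tv.distinct)

lemma leq_p_Ff_glb_t_iff: "leq_p Ff (glb_t S) \<longleftrightarrow> (\<exists>x\<in>S. leq_p Ff x)"
  unfolding glb_t_def leq_p_def by (auto; metis tv.exhaust tv.distinct)

lemma leq_p_Tt_lub_t_iff: "leq_p Tt (lub_t S) \<longleftrightarrow> (\<exists>x\<in>S. leq_p Tt x)"
  unfolding lub_t_def leq_p_def by (auto; metis tv.exhaust tv.distinct)

lemma leq_p_Ff_lub_t_iff: "leq_p Ff (lub_t S) \<longleftrightarrow> (\<forall>x\<in>S. leq_p Ff x)"
  unfolding lub_t_def leq_p_def by (auto; metis tv.exhaust tv.distinct)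

lemma leq_p_Tt_inv_tv_iff: "leq_p Tt (inv_tv x) \<longleftrightarrow> leq_p Ff x"
  by (cases x) (auto simp: leq_p_def)

lemma leq_p_Ff_inv_tv_iff: "leq_p Ff (inv_tv x) \<longleftrightarrow> leq_p Tt x"
  by (cases x) (auto simp: leq_p_def)

lemma leq_p_s_refl: "leq_p_s J J"
  by (simp add: leq_p_s_def leq_p_refl)

lemma leq_p_s_trans: "leq_p_s J K \<Longrightarrow> leq_p_s K L \<Longrightarrow> leq_p_s J L"
  unfolding leq_p_s_def by (meson leq_p_trans)

lemma leq_p_s_antisym: "leq_p_s J K \<Longrightarrow> leq_p_s K J \<Longrightarrow> J = K"
  unfolding leq_p_s_def by (intro ext) (meson leq_p_antisym)

lemma lub_p_s_upper: "J \<in> C \<Longrightarrow> leq_p_s J (lub_p_s C)"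
  unfolding leq_p_s_def lub_p_s_def by (auto intro: lub_p_upper)

lemma lub_p_s_least: "(\<And>J. J \<in> C \<Longrightarrow> leq_p_s J U) \<Longrightarrow> leq_p_s (lub_p_s C) U"
  unfolding leq_p_s_def lub_p_s_def by (auto intro!: lub_p_least)

lemma lub_p_s_singleton: "lub_p_s {J} = J"
  by (intro leq_p_s_antisym lub_p_s_least lub_p_s_upper) (auto simp: leq_p_s_refl)

lemma Field_leq_p_s: "Field {(J, K). leq_p_s J K} = UNIV"
  using leq_p_s_refl by (auto simp: Field_def)

lemma partial_order_leq_p_s: "partial_order_on UNIV {(J, K). leq_p_s J K}"
  unfolding partial_order_on_def preorder_on_def refl_on_def trans_def antisym_def
  using leq_p_s_refl leq_p_s_trans leq_p_s_antisym by blast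

lemma tf_Ct [simp]: "tf J (Ct P) ds = leq_p Tt (J P ds)"
  by (simp add: tf_def)

lemma tf_Cf [simp]: "tf J (Cf P) ds = leq_p Ff (J P ds)"
  by (simp add: tf_def)

lemma tf_inject: "tf I = tf J \<Longrightarrow> I = J"
proof (intro ext)
  fix P ds
  assume "tf I = tf J"
  then have "tf I (Ct P) ds = tf J (Ct P) ds" "tf I (Cf P) ds = tf J (Cf P) ds"
    by simp_all
  then show "I P ds = J P ds"
    by (intro tv_eqI) simp_all
qed

lemma tf_mono: "leq_p_s I J \<Longrightarrow> leq_t2 (tf I) (tf J)"
  unfolding leq_t2_def leq_p_s_def
proof (intro allI impI)
  fix Q ds
  assume "\<forall>P ds. leq_p (I P ds) (J P ds)" "tf I Q ds"
  then show "tf J Q ds"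
    by (cases Q) (auto intro: leq_p_trans)
qed

lemma tf_lub_p_s: "tf (lub_p_s C) Q ds \<longleftrightarrow> (\<exists>K\<in>C. tf K Q ds)"
  by (cases Q) (auto simp: lub_p_s_def leq_p_Tt_lub_p_iff leq_p_Ff_lub_p_iff)

lemma wf2_tf: "wf4 Sig ar J \<Longrightarrow> wf2 Sig ar (tf J)"
  unfolding wf2_def wf4_def
  by (metis base_sym.simps tf_Cf tf_Ct leq_p_simps(5,6) tfsym.exhaust)

lemma sat_tf_ct_cf:
  "sat (tf J) \<theta> (ct f) = leq_p Tt (val4 J \<theta> f) \<and> sat (tf J) \<theta> (cf f) = leq_p Ff (val4 J \<theta> f)"
  by (induction f arbitrary: \<theta>)
    (auto simp: leq_p_Tt_glb_t_iff leq_p_Ff_glb_t_iff leq_p_Tt_lub_t_iff leq_p_Ff_lub_t_iff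
      leq_p_Tt_inv_tv_iff leq_p_Ff_inv_tv_iff)

lemma sat_ct_cf_mono:
  "leq_t2 M M' \<Longrightarrow> (sat M \<theta> (ct f) \<longrightarrow> sat M' \<theta> (ct f)) \<and> (sat M \<theta> (cf f) \<longrightarrow> sat M' \<theta> (cf f))"
  by (induction f arbitrary: \<theta>) (auto simp: leq_t2_def; blast)+

lemma glb_t2_eq_least: "M \<in> Ms \<Longrightarrow> (\<And>M'. M' \<in> Ms \<Longrightarrow> leq_t2 M M') \<Longrightarrow> glb_t2 Ms = M"
  unfolding glb_t2_def leq_t2_def by (intro ext) blast

subsection \<open>Existence of stabilizing refinement sequences\<close>

definition refine_step ::
  "(('p, 'd) struct4 \<Rightarrow> ('p, 'd) struct4) set \<Rightarrow> ('p, 'd) struct4 \<Rightarrow> ('p, 'd) struct4" where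
  "refine_step W J = (if \<exists>Op\<in>W. Op J \<noteq> J then (SOME Op. Op \<in> W \<and> Op J \<noteq> J) J else J)"

lemma refine_step_cases: "refine_step W J = J \<or> (\<exists>Op\<in>W. refine_step W J = Op J)"
proof (cases "\<exists>Op. Op \<in> W \<and> Op J \<noteq> J")
  case True
  with someI_ex[OF True] show ?thesis
    by (auto simp: refine_step_def)
qed (simp add: refine_step_def)

lemma refine_step_eq_self_iff: "refine_step W J = J \<longleftrightarrow> (\<forall>Op\<in>W. Op J = J)"
proof
  assume fixed: "refine_step W J = J"
  show "\<forall>Op\<in>W. Op J = J"
  proof (rule ccontr)
    assume "\<not> (\<forall>Op\<in>W. Op J = J)"
    then have "\<exists>Op. Op \<in> W \<and> Op J \<noteq> J" by blast
    from someI_ex[OF this] fixed show False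
      by (auto simp: refine_step_def split: if_splits)
  qed
qed (simp add: refine_step_def)

locale inflationary_ops =
  fixes W :: "(('p, 'd) struct4 \<Rightarrow> ('p, 'd) struct4) set"
  assumes inflationary: "Op \<in> W \<Longrightarrow> leq_p_s J (Op J)"
begin

lemma refine_step_inflationary: "leq_p_s J (refine_step W J)"
  using refine_step_cases[of W J] inflationary leq_p_s_refl by metis

sublocale bourbaki_witt_fixpoint lub_p_s "{(J, K). leq_p_s J K}" "refine_step W"
  by unfold_locales
    (simp_all add: Field_leq_p_s partial_order_leq_p_s refine_step_inflationary lub_p_s_upper,
      blast intro: lub_p_s_least)

lemma iterates_above_ge': "x \<in> iterates_above a \<Longrightarrow> leq_p_s a x"
  using iterates_above_ge by (simp add: Field_leq_p_s)

lemma iterates_above_chain: "x \<in> iterates_above a \<Longrightarrow> y \<in> iterates_above a \<Longrightarrow> leq_p_s x y \<or> leq_p_s y x"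
  using chain_iterates_above[of a] by (auto simp: Field_leq_p_s dest: in_ChainsD)

lemma iterates_above_le_fixp_above: "x \<in> iterates_above a \<Longrightarrow> leq_p_s x (fixp_above a)"
  using chain_iterates_above[of a] lub_upper by (simp add: Field_leq_p_s fixp_above_inside)

lemma fixp_above_fixed: "refine_step W (fixp_above a) = fixp_above a"
  using fixp_above_unfold[of a] by (simp add: Field_leq_p_s)

lemma iterates_above_of_fixed:
  assumes fixed: "refine_step W b = b" and "x \<in> iterates_above b"
  shows "x = b"
  using assms(2)
proof induction
  case (Sup M)
  then have "M = {b}" by blast
  then show ?case
    by (simp add: lub_p_s_singleton)
qed (simp_all add: fixed)

lemma iterates_above_le_or_step_le:
  assumes "c \<in> iterates_above a" "x \<in> iterates_above a"
  shows "leq_p_s x c \<or> leq_p_s (refine_step W c) x"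
proof -
  from iterates_above_triangle[OF assms(2,1)]
  consider "x \<in> iterates_above c" | "c \<in> iterates_above x"
    by (auto simp: Field_leq_p_s)
  then show ?thesis
  proof cases
    case 1
    then have "x = c \<or> x \<in> iterates_above (refine_step W c)"
      by (rule iterates_above_successor) (simp add: Field_leq_p_s)
    then show ?thesis
      using iterates_above_ge' leq_p_s_refl by blast
  qed (use iterates_above_ge' in blast)
qed

lemma iterates_above_le_fixed:
  assumes "b \<in> iterates_above a" "refine_step W b = b" "x \<in> iterates_above a"
  shows "leq_p_s x b"
proof -
  from iterates_above_triangle[OF assms(3,1)]
  consider "x \<in> iterates_above b" | "b \<in> iterates_above x"
    by (auto simp: Field_leq_p_s)
  then show ?thesis
    using iterates_above_of_fixed[OF assms(2)] iterates_above_ge' leq_p_s_refl by cases blast+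
qed

lemma iterates_above_has_least:
  assumes A: "A \<subseteq> iterates_above a" "A \<noteq> {}"
  shows "\<exists>m\<in>A. \<forall>x\<in>A. leq_p_s m x"
proof -
  define B where "B = {K \<in> iterates_above a. \<forall>x\<in>A. leq_p_s K x}"
  define b where "b = lub_p_s B"
  have "a \<in> B"
    using A iterates_above_ge' by (auto simp: B_def intro: iterates_above.base)
  moreover have "B \<in> Chains {(J, K). leq_p_s J K}"
    by (rule ChainsI) (auto simp: B_def dest: iterates_above_chain)
  ultimately have b_in: "b \<in> iterates_above a"
    unfolding b_def by (intro iterates_above.Sup) (auto simp: B_def)
  have b_below: "\<forall>x\<in>A. leq_p_s b x"
    unfolding b_def B_def by (auto intro: lub_p_s_least)
  show ?thesis
  proof (cases "b \<in> A")
    case False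
    have "leq_p_s (refine_step W b) x" if "x \<in> A" for x
      using iterates_above_le_or_step_le[OF b_in, of x] A b_below False that leq_p_s_antisym by blast
    then have "refine_step W b \<in> B"
      using b_in by (auto simp: B_def intro: iterates_above.step)
    then have fixed: "refine_step W b = b"
      using lub_p_s_upper refine_step_inflationary leq_p_s_antisym unfolding b_def by metis
    obtain x where "x \<in> A" using A by blast
    then have "x = b"
      using iterates_above_le_fixed[OF b_in fixed] A b_below leq_p_s_antisym by blast
    with \<open>x \<in> A\<close> False show ?thesis by simp
  qed (use b_below in blast)
qed

lemma iterates_above_successor_or_limit:
  assumes J: "J \<in> iterates_above a" "J \<noteq> a"
  shows "(\<exists>J'. imm_pred (iterates_above a) J' J \<and> (\<exists>Op\<in>W. J = Op J')) \<or>
    ((\<nexists>J'. imm_pred (iterates_above a) J' J) \<and> J = lub_p_s {K \<in> iterates_above a. less_p_s K J})"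
    (is "?succ \<or> ?lim")
proof (cases "\<exists>J'. imm_pred (iterates_above a) J' J")
  case True
  then obtain J' where pred: "imm_pred (iterates_above a) J' J" by blast
  then have J': "J' \<in> iterates_above a" and less: "less_p_s J' J"
    unfolding imm_pred_def by auto
  have moves: "refine_step W J' \<noteq> J'"
    using iterates_above_le_fixed[OF J' _ J(1)] less leq_p_s_antisym
    unfolding less_p_s_def by blast
  have "leq_p_s (refine_step W J') J"
    using iterates_above_le_or_step_le[OF J' J(1)] less leq_p_s_antisym unfolding less_p_s_def by blast
  moreover have "less_p_s J' (refine_step W J')"
    using moves refine_step_inflationary unfolding less_p_s_def by auto
  moreover have "refine_step W J' \<in> iterates_above a"
    using J' by (rule iterates_above.step)
  ultimately have "refine_step W J' = J"
    using pred unfolding imm_pred_def less_p_s_def by auto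
  then have ?succ
    using refine_step_cases[of W J'] moves pred by metis
  then show ?thesis ..
next
  case False
  let ?P = "{K \<in> iterates_above a. less_p_s K J}"
  have "a \<in> ?P"
    using J iterates_above_ge' unfolding less_p_s_def by (auto intro: iterates_above.base)
  moreover have "?P \<in> Chains {(J, K). leq_p_s J K}"
    by (rule ChainsI) (auto dest: iterates_above_chain)
  ultimately have P_in: "lub_p_s ?P \<in> iterates_above a"
    by (intro iterates_above.Sup) auto
  have P_le: "leq_p_s (lub_p_s ?P) J"
    by (rule lub_p_s_least) (auto simp: less_p_s_def)
  have "lub_p_s ?P = J"
  proof (rule ccontr)
    assume "lub_p_s ?P \<noteq> J"
    moreover have "\<not> less_p_s (lub_p_s ?P) K" if "K \<in> ?P" for K
      using lub_p_s_upper[OF that] leq_p_s_antisym unfolding less_p_s_def by blast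
    ultimately have "imm_pred (iterates_above a) (lub_p_s ?P) J"
      using P_in P_le unfolding imm_pred_def less_p_s_def by blast
    with False show False by blast
  qed
  with False show ?thesis by auto
qed

theorem stabilizing_seq_iterates_above:
  "stabilizing_seq W a (iterates_above a) (fixp_above a)"
  unfolding stabilizing_seq_def refinement_seq_def
proof (intro conjI ballI allI impI)
  show "a \<in> iterates_above a" by (rule iterates_above.base)
  show "fixp_above a \<in> iterates_above a" by (rule fixp_iterates_above)
  show "leq_p_s J K \<or> leq_p_s K J" if "J \<in> iterates_above a" "K \<in> iterates_above a" for J K
    using iterates_above_chain that .
  show "\<exists>m\<in>A. \<forall>x\<in>A. leq_p_s m x" if "A \<subseteq> iterates_above a \<and> A \<noteq> {}" for A
    using iterates_above_has_least that by blast
  show "leq_p_s a J" if "J \<in> iterates_above a" for J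
    using iterates_above_ge' that .
  show "leq_p_s J (fixp_above a)" if "J \<in> iterates_above a" for J
    using iterates_above_le_fixp_above that .
  show "(\<exists>J'. imm_pred (iterates_above a) J' J \<and> (\<exists>Op\<in>W. J = Op J')) \<or>
    ((\<nexists>J'. imm_pred (iterates_above a) J' J) \<and> J = lub_p_s {K \<in> iterates_above a. less_p_s K J})"
    if "J \<in> iterates_above a" "J \<noteq> a" for J
    using iterates_above_successor_or_limit that .
  show "Op (fixp_above a) = fixp_above a" if "Op \<in> W" for Op
    using fixp_above_fixed refine_step_eq_self_iff that by blast
qed

end

subsection \<open>Transfinite induction along a refinement sequence\<close>

lemma refinement_seq_induct:
  assumes seq: "refinement_seq W I0 S L"
    and base: "P I0"
    and step: "\<And>J Op. J \<in> S \<Longrightarrow> Op \<in> W \<Longrightarrow> P J \<Longrightarrow> P (Op J)"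
    and limit: "\<And>C. C \<subseteq> S \<Longrightarrow> \<forall>K\<in>C. P K \<Longrightarrow> P (lub_p_s C)"
    and J: "J \<in> S"
  shows "P J"
proof (rule ccontr)
  have has_least: "\<exists>m\<in>A. \<forall>x\<in>A. leq_p_s m x" if "A \<subseteq> S" "A \<noteq> {}" for A
    using seq that unfolding refinement_seq_def by blast
  have succ_or_lim: "(\<exists>J'. imm_pred S J' K \<and> (\<exists>Op\<in>W. K = Op J')) \<or>
      K = lub_p_s {K' \<in> S. less_p_s K' K}" if "K \<in> S" "K \<noteq> I0" for K
    using seq that unfolding refinement_seq_def by blast
  assume "\<not> P J"
  with J has_least[of "{x \<in> S. \<not> P x}"] obtain m
    where m: "m \<in> S" "\<not> P m" and least: "\<And>x. x \<in> S \<Longrightarrow> \<not> P x \<Longrightarrow> leq_p_s m x"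
    by blast
  have below: "P K" if "K \<in> S" "less_p_s K m" for K
    using least[OF that(1)] that(2) leq_p_s_antisym unfolding less_p_s_def by blast
  from m base have "(\<exists>J'. imm_pred S J' m \<and> (\<exists>Op\<in>W. m = Op J')) \<or>
    m = lub_p_s {K \<in> S. less_p_s K m}"
    by (intro succ_or_lim) auto
  then show False
  proof
    assume "\<exists>J'. imm_pred S J' m \<and> (\<exists>Op\<in>W. m = Op J')"
    then show False
      using below step m unfolding imm_pred_def by blast
  next
    assume "m = lub_p_s {K \<in> S. less_p_s K m}"
    moreover have "P (lub_p_s {K \<in> S. less_p_s K m})"
      by (rule limit) (auto intro: below)
    ultimately show False using m by simp
  qed
qed

subsection \<open>INF propagators and the rules of Delta V\<close>

lemma inf_prop_inflationary: "leq_p_s J (inf_prop \<phi> J)"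
  unfolding leq_p_s_def inf_prop_def by (auto intro: lub_p_upper leq_p_refl)

lemma wf4_inf_prop: "wf_inf Sig ar \<phi> \<Longrightarrow> wf4 Sig ar J \<Longrightarrow> wf4 Sig ar (inf_prop \<phi> J)"
  unfolding wf4_def inf_prop_def wf_inf_def by auto

lemma wf4_lub_p_s:
  assumes "\<And>K. K \<in> C \<Longrightarrow> wf4 Sig ar K"
  shows "wf4 Sig ar (lub_p_s C)"
proof -
  have "lub_p {J P ds |J. J \<in> C} = Uu" if "\<not> (P \<in> Sig \<and> length ds = ar P)" for P ds
  proof -
    have "{J P ds |J. J \<in> C} \<subseteq> {Uu}"
      using assms that unfolding wf4_def by auto
    then show ?thesis
      unfolding lub_p_def by auto
  qed
  then show ?thesis
    unfolding wf4_def lub_p_s_def by auto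
qed

definition head_sym :: "('p, 'v) inf_sent \<Rightarrow> 'p tfsym" where
  "head_sym \<phi> = (if ipos \<phi> then Ct (ipred \<phi>) else Cf (ipred \<phi>))"

lemma rule_in_Delta: "\<phi> \<in> V \<Longrightarrow> (head_sym \<phi>, ivars \<phi>, ct (ibody \<phi>)) \<in> Delta V"
  unfolding Delta_def head_sym_def by auto

lemma tf_inf_prop_cases:
  "tf (inf_prop \<phi> J) Q ds \<Longrightarrow> tf J Q ds \<or>
    (Q = head_sym \<phi> \<and> length ds = length (ivars \<phi>) \<and>
     sat (tf J) (upd (\<lambda>_. undefined) (ivars \<phi>) ds) (ct (ibody \<phi>)))"
  by (cases Q)
    (auto simp: inf_prop_def head_sym_def sat_tf_ct_cf leq_p_Tt_lub_p_iff leq_p_Ff_lub_p_iff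
      split: if_splits)

lemma tf_head_of_inf_prop_fixpoint:
  assumes fixed: "inf_prop \<phi> J = J" and len: "length ds = length (ivars \<phi>)"
    and body: "sat (tf J) (upd (\<lambda>_. undefined) (ivars \<phi>) ds) (ct (ibody \<phi>))"
  shows "tf J (head_sym \<phi>) ds"
proof -
  let ?L = "if ipos \<phi> then Tt else Ff"
  have "J (ipred \<phi>) ds = lub_p {?L, J (ipred \<phi>) ds}"
    using fun_cong[OF fun_cong[OF fixed, of "ipred \<phi>"], of ds] len body
    by (simp add: inf_prop_def sat_tf_ct_cf)
  then have "leq_p ?L (J (ipred \<phi>) ds)"
    by (metis insertI1 lub_p_upper)
  then show ?thesis
    by (auto simp: head_sym_def)
qed

lemma models_rules_Delta_head:
  assumes "models_rules M (Delta V)" "\<phi> \<in> V" "length ds = length (ivars \<phi>)"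
    and "sat M (upd (\<lambda>_. undefined) (ivars \<phi>) ds) (ct (ibody \<phi>))"
  shows "M (head_sym \<phi>) ds"
proof -
  have "T_op (Delta V) M (head_sym \<phi>) ds"
    using assms(2-4) rule_in_Delta unfolding T_op_def by blast
  then show ?thesis
    using assms(1) unfolding models_rules_def by simp
qed

lemma models_rules_tf_fixpoint:
  assumes fixed: "\<And>\<phi>. \<phi> \<in> V \<Longrightarrow> inf_prop \<phi> L = L"
  shows "models_rules (tf L) (Delta V)"
  unfolding models_rules_def
proof (intro ext iffI)
  fix Q ds
  assume "T_op (Delta V) (tf L) Q ds"
  then consider "tf L Q ds"
    | xs \<chi> where "(Q, xs, \<chi>) \<in> Delta V" "length ds = length xs"
      "sat (tf L) (upd (\<lambda>_. undefined) xs ds) \<chi>"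
    unfolding T_op_def by blast
  then show "tf L Q ds"
  proof cases
    case 2
    then obtain \<phi> where "\<phi> \<in> V" "Q = head_sym \<phi>" "xs = ivars \<phi>" "\<chi> = ct (ibody \<phi>)"
      unfolding Delta_def head_sym_def by auto
    with 2 fixed show ?thesis
      using tf_head_of_inf_prop_fixpoint by metis
  qed
qed (simp add: T_op_def)

lemma tf_inf_prop_below_model:
  assumes "models_rules M (Delta V)" "\<phi> \<in> V" "leq_t2 (tf J) M"
  shows "leq_t2 (tf (inf_prop \<phi> J)) M"
  unfolding leq_t2_def
proof (intro allI impI)
  fix Q ds
  assume "tf (inf_prop \<phi> J) Q ds"
  then consider "tf J Q ds"
    | "Q = head_sym \<phi>" "length ds = length (ivars \<phi>)"
      "sat (tf J) (upd (\<lambda>_. undefined) (ivars \<phi>) ds) (ct (ibody \<phi>))"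
    using tf_inf_prop_cases by blast
  then show "M Q ds"
  proof cases
    case 1
    then show ?thesis using assms(3) unfolding leq_t2_def by blast
  next
    case 2
    then show ?thesis
      using sat_ct_cf_mono[OF assms(3)] models_rules_Delta_head[OF assms(1,2)] by blast
  qed
qed

lemma stabilizing_seq_tf_last:
  assumes seq: "stabilizing_seq (Ops V) I S L"
    and wf_V: "\<forall>\<phi>\<in>V. wf_inf Sig ar \<phi>" and wf_I: "wf4 Sig ar I"
  shows "tf L = glb_t2 {M. wf2 Sig ar M \<and> models_rules M (Delta V) \<and> leq_t2 (tf I) M}"
    (is "_ = glb_t2 ?Models")
proof -
  have rseq: "refinement_seq (Ops V) I S L"
    using seq by (simp add: stabilizing_seq_def)
  then have L: "L \<in> S" "leq_p_s I L"
    unfolding refinement_seq_def by blast+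
  have "wf4 Sig ar L"
    using rseq wf_I _ _ L(1)
  proof (rule refinement_seq_induct)
    show "wf4 Sig ar (Op J)" if "Op \<in> Ops V" "wf4 Sig ar J" for J Op
      using that wf_V wf4_inf_prop unfolding Ops_def by blast
    show "wf4 Sig ar (lub_p_s C)" if "\<forall>K\<in>C. wf4 Sig ar K" for C
      using that wf4_lub_p_s by blast
  qed
  moreover have "models_rules (tf L) (Delta V)"
    using seq unfolding stabilizing_seq_def Ops_def by (intro models_rules_tf_fixpoint) blast
  ultimately have L_model: "tf L \<in> ?Models"
    using tf_mono[OF L(2)] wf2_tf by blast
  have below_models: "leq_t2 (tf J) M" if "M \<in> ?Models" "J \<in> S" for M J
    using rseq _ _ _ that(2)
  proof (rule refinement_seq_induct)
    show "leq_t2 (tf I) M" using that(1) by blast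
    show "leq_t2 (tf (Op J')) M" if "Op \<in> Ops V" "leq_t2 (tf J') M" for J' Op
      using that \<open>M \<in> ?Models\<close> tf_inf_prop_below_model unfolding Ops_def by blast
    show "leq_t2 (tf (lub_p_s C)) M" if "\<forall>K\<in>C. leq_t2 (tf K) M" for C
      using that unfolding leq_t2_def tf_lub_p_s by blast
  qed
  show ?thesis
    using L_model below_models[OF _ L(1)] by (intro glb_t2_eq_least[symmetric])
qed

theorem proposition4p6:
  fixes Sig :: "'p set" and ar :: "'p \<Rightarrow> nat"
    and V :: "('p, 'v) inf_sent set" and I :: "('p, 'd) struct4"
  assumes "finite Sig"
    and "finite V"
    and "\<forall>\<phi>\<in>V. wf_inf Sig ar \<phi>"
    and "wf4 Sig ar I"
  shows "tf (lim_ref (Ops V) I) =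
         glb_t2 {M. wf2 Sig ar M \<and> models_rules M (Delta V) \<and> leq_t2 (tf I) M}"
proof -
  interpret inflationary_ops "Ops V"
    by unfold_locales (auto simp: Ops_def inf_prop_inflationary)
  let ?L = "fixp_above I"
  have last_unique: "\<exists>!L. \<exists>S. stabilizing_seq (Ops V) I S L"
  proof (rule ex1I)
    show "\<exists>S. stabilizing_seq (Ops V) I S ?L"
      using stabilizing_seq_iterates_above by blast
    fix L
    assume "\<exists>S. stabilizing_seq (Ops V) I S L"
    then obtain S where "stabilizing_seq (Ops V) I S L" ..
    then have "tf L = tf ?L"
      using stabilizing_seq_tf_last[OF _ assms(3,4)] stabilizing_seq_iterates_above[of I] by simp
    then show "L = ?L"
      by (rule tf_inject)
  qed
  from theI'[OF last_unique] obtain S where "stabilizing_seq (Ops V) I S (lim_ref (Ops V) I)"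
    unfolding lim_ref_def ..
  then show ?thesis
    by (rule stabilizing_seq_tf_last[OF _ assms(3,4)])
qed

end
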